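(* Let $\varphi\colon G\to G$ and $\psi\colon H\to H$ be endomorphisms of abelian groups and suppose $\psi$ is a factor of $\varphi$. Then: (1) if $G$ is torsion and $\varphi$ is positively expansive, then $\psi$ is positively expansive; (2) if $G$ is torsion, $\varphi$ and $\psi$ are automorphisms and $\varphi$ is expansive, then $\psi$ is expansive; (3) if $\varphi$ and $\psi$ are conjugate, then $\varphi$ is positively expansive if and only if $\psi$ is, and, when they are automorphisms, $\varphi$ is expansive if and only if $\psi$ is.
   Context: $\mathbb N=\{0,1,2,\dots\}$. An endomorphism $\varphi$ of an abelian group $G$ is positively expansive if there is a finite subgroup $S\leq G$ such that for every finite subgroup $F\leq G$ there is $n\in\mathbb N$ with $F\subseteq\sum_{k=0}^n\varphi^kS$. An automorphism $\varphi$ is expansive if there is a finite subgroup $S\leq G$ such that for every finite subgroup $F\leq G$ there is $n\in\mathbb N$ with $F\subseteq\sum_{|k|\leq n}\varphi^kS$. $\psi$ is a factor of $\varphi$ if there is a surjective homomorphism $\pi\colon G\to H$ with $\pi\circ\varphi=\psi\circ\pi$; they are conjugate if such a $\pi$ can be chosen to be an isomorphism. *)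

theory Defs
  imports Main
begin

text \<open>Abelian groups are modelled as types of class ab_group_add (the whole type is the group).\<close>

definition grp_hom :: "('a::ab_group_add \<Rightarrow> 'b::ab_group_add) \<Rightarrow> bool" where
  "grp_hom f \<longleftrightarrow> (\<forall>x y. f (x + y) = f x + f y)"

definition endomorphism :: "('a::ab_group_add \<Rightarrow> 'a) \<Rightarrow> bool" where
  "endomorphism f \<longleftrightarrow> grp_hom f"

definition automorphism :: "('a::ab_group_add \<Rightarrow> 'a) \<Rightarrow> bool" where
  "automorphism f \<longleftrightarrow> grp_hom f \<and> bij f"

definition subgrp :: "'a::ab_group_add set \<Rightarrow> bool" where
  "subgrp S \<longleftrightarrow> 0 \<in> S \<and> (\<forall>x\<in>S. \<forall>y\<in>S. x + y \<in> S) \<and> (\<forall>x\<in>S. - x \<in> S)"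

definition torsion_elem :: "'a::ab_group_add \<Rightarrow> bool" where
  "torsion_elem x \<longleftrightarrow> (\<exists>n::nat. n > 0 \<and> (\<Sum>i<n. x) = 0)"

definition subgrp_sum :: "('i \<Rightarrow> 'a::ab_group_add set) \<Rightarrow> 'i set \<Rightarrow> 'a set" where
  "subgrp_sum A K = {\<Sum>k\<in>K. g k | g. \<forall>k\<in>K. g k \<in> A k}"

text \<open>Integer powers of a map (negative powers use the inverse; meaningful for automorphisms).\<close>
definition zpow :: "('a \<Rightarrow> 'a) \<Rightarrow> int \<Rightarrow> 'a \<Rightarrow> 'a" where
  "zpow f k = (if k \<ge> 0 then f ^^ nat k else (inv f) ^^ nat (- k))"

definition pos_expansive :: "('a::ab_group_add \<Rightarrow> 'a) \<Rightarrow> bool" where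
  "pos_expansive f \<longleftrightarrow> (\<exists>S. finite S \<and> subgrp S \<and>
     (\<forall>F. finite F \<and> subgrp F \<longrightarrow> (\<exists>n::nat. F \<subseteq> subgrp_sum (\<lambda>k. (f ^^ k) ` S) {0..n})))"

definition expansive :: "('a::ab_group_add \<Rightarrow> 'a) \<Rightarrow> bool" where
  "expansive f \<longleftrightarrow> (\<exists>S. finite S \<and> subgrp S \<and>
     (\<forall>F. finite F \<and> subgrp F \<longrightarrow> (\<exists>n::nat. F \<subseteq> subgrp_sum (\<lambda>k. zpow f k ` S) {- int n..int n})))"

definition is_factor :: "('a::ab_group_add \<Rightarrow> 'a) \<Rightarrow> ('b::ab_group_add \<Rightarrow> 'b) \<Rightarrow> bool" where
  "is_factor \<phi> \<psi> \<longleftrightarrow> (\<exists>\<pi>. grp_hom \<pi> \<and> surj \<pi> \<and> \<pi> \<circ> \<phi> = \<psi> \<circ> \<pi>)"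

definition conjugate :: "('a::ab_group_add \<Rightarrow> 'a) \<Rightarrow> ('b::ab_group_add \<Rightarrow> 'b) \<Rightarrow> bool" where
  "conjugate \<phi> \<psi> \<longleftrightarrow> (\<exists>\<pi>. grp_hom \<pi> \<and> bij \<pi> \<and> \<pi> \<circ> \<phi> = \<psi> \<circ> \<pi>)"

end

theory Submission
  imports Defs HOL.Modules "HOL-Library.FuncSet"
begin

text \<open>A factor map \<pi> carries \<phi>-iterates to \<psi>-iterates, so it maps the sum of the
  subgroups \<phi>^k S into the sum of the \<psi>^k (\<pi> S), and \<pi> S is a candidate witness
  of (positive) expansivity for \<psi>. This works as soon as every finite subgroup of H lies in the
  image of a finite subgroup of G. That is clear for a bijective \<pi>; for a merely surjective \<pi>
  it holds when G is torsion, since the subgroup generated by finitely many torsion elements is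
  finite.\<close>

lemma grp_hom_iff_additive: "grp_hom f \<longleftrightarrow> additive f"
  unfolding grp_hom_def using additive.add additive.intro by blast

lemma subgrp_image:
  assumes "grp_hom f" "subgrp S"
  shows "subgrp (f ` S)"
proof -
  interpret additive f using assms(1) by (simp add: grp_hom_iff_additive)
  show ?thesis
    unfolding subgrp_def
  proof (intro conjI ballI)
    show "0 \<in> f ` S" using assms(2) zero unfolding subgrp_def by (metis image_eqI)
    show "a + b \<in> f ` S" if "a \<in> f ` S" "b \<in> f ` S" for a b
      using that assms(2) unfolding subgrp_def by (auto simp flip: add)
    show "- a \<in> f ` S" if "a \<in> f ` S" for a
      using that assms(2) unfolding subgrp_def by (auto simp flip: minus)
  qed
qed

lemma subgrp_vimage:
  assumes "grp_hom f" "subgrp S"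
  shows "subgrp (f -` S)"
proof -
  interpret additive f using assms(1) by (simp add: grp_hom_iff_additive)
  show ?thesis
    using assms(2) unfolding subgrp_def by (simp add: add zero minus)
qed

lemma subgrp_subgrp_sum:
  assumes "\<And>k. k \<in> K \<Longrightarrow> subgrp (A k)"
  shows "subgrp (subgrp_sum A K)"
  unfolding subgrp_def
proof (intro conjI ballI)
  show "0 \<in> subgrp_sum A K"
    unfolding subgrp_sum_def using assms by (auto simp: subgrp_def intro!: exI[of _ "\<lambda>_. 0"])
next
  fix x y assume "x \<in> subgrp_sum A K" "y \<in> subgrp_sum A K"
  then obtain g h where "\<forall>k\<in>K. g k \<in> A k" "x = sum g K" "\<forall>k\<in>K. h k \<in> A k" "y = sum h K"
    unfolding subgrp_sum_def by blast
  with assms show "x + y \<in> subgrp_sum A K"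
    unfolding subgrp_sum_def subgrp_def
    by (auto simp: sum.distrib intro!: exI[of _ "\<lambda>k. g k + h k"])
next
  fix x assume "x \<in> subgrp_sum A K"
  then obtain g where "\<forall>k\<in>K. g k \<in> A k" "x = sum g K"
    unfolding subgrp_sum_def by blast
  with assms show "- x \<in> subgrp_sum A K"
    unfolding subgrp_sum_def subgrp_def
    by (auto simp: sum_negf intro!: exI[of _ "\<lambda>k. - g k"])
qed

lemma finite_subgrp_sum:
  assumes "finite K" "\<And>k. k \<in> K \<Longrightarrow> finite (A k)"
  shows "finite (subgrp_sum A K)"
proof -
  have "subgrp_sum A K \<subseteq> (\<lambda>g. sum g K) ` PiE K A"
  proof
    fix z assume "z \<in> subgrp_sum A K"
    then obtain g where "\<forall>k\<in>K. g k \<in> A k" "z = sum g K"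
      unfolding subgrp_sum_def by blast
    then show "z \<in> (\<lambda>g. sum g K) ` PiE K A"
      by (intro image_eqI[of _ _ "restrict g K"]) (simp_all add: restrict_PiE_iff)
  qed
  then show ?thesis
    by (rule finite_subset) (simp add: assms finite_PiE)
qed

lemma mem_subgrp_sum:
  assumes "finite K" "\<And>k. k \<in> K \<Longrightarrow> 0 \<in> A k" "j \<in> K" "a \<in> A j"
  shows "a \<in> subgrp_sum A K"
  unfolding subgrp_sum_def
  using assms by (auto intro!: exI[of _ "\<lambda>k. if k = j then a else 0"])

lemma image_subgrp_sum_subset:
  assumes "grp_hom f" "\<And>k. k \<in> K \<Longrightarrow> f ` A k \<subseteq> B k"
  shows "f ` subgrp_sum A K \<subseteq> subgrp_sum B K"
proof -
  interpret additive f using assms(1) by (simp add: grp_hom_iff_additive)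
  show ?thesis
    unfolding subgrp_sum_def using assms(2) by (fastforce simp: sum)
qed

lemma sum_const_lessThan_add:
  fixes x :: "'a::comm_monoid_add" and m n :: nat
  shows "(\<Sum>i<m + n. x) = (\<Sum>i<m. x) + (\<Sum>i<n. x)"
  by (induction n) (simp_all add: add_ac)

lemma sum_const_lessThan_mult:
  fixes x :: "'a::comm_monoid_add" and m n :: nat
  shows "(\<Sum>i<m * n. x) = (\<Sum>j<n. \<Sum>i<m. x)"
  by (induction n) (simp_all add: sum_const_lessThan_add add_ac)

definition multiples :: "'a::ab_group_add \<Rightarrow> 'a set" where
  "multiples x = range (\<lambda>n::nat. \<Sum>i<n. x)"

lemma zero_in_multiples: "0 \<in> multiples x"
  unfolding multiples_def by (rule range_eqI[of _ _ 0]) simp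

lemma self_in_multiples: "x \<in> multiples x"
  unfolding multiples_def by (rule range_eqI[of _ _ 1]) simp

lemma sum_const_lessThan_mod:
  fixes x :: "'a::comm_monoid_add" and m N :: nat
  assumes "(\<Sum>i<N. x) = 0"
  shows "(\<Sum>i<m. x) = (\<Sum>i<m mod N. x)"
proof -
  have "(\<Sum>i<m. x) = (\<Sum>i<N * (m div N) + m mod N. x)" by simp
  also have "\<dots> = (\<Sum>i<m mod N. x)"
    unfolding sum_const_lessThan_add sum_const_lessThan_mult assms by simp
  finally show ?thesis .
qed

lemma finite_multiples:
  assumes "torsion_elem x"
  shows "finite (multiples x)"
proof -
  obtain N :: nat where N: "N > 0" "(\<Sum>i<N. x) = 0"
    using assms unfolding torsion_elem_def by blast
  have "(\<Sum>i<n. x) \<in> (\<lambda>n. \<Sum>i<n. x) ` {..<N}" for n :: nat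
    using sum_const_lessThan_mod[OF N(2), of n] N(1) by (metis image_eqI lessThan_iff mod_less_divisor)
  then have "multiples x \<subseteq> (\<lambda>n. \<Sum>i<n. x) ` {..<N}"
    unfolding multiples_def by blast
  then show ?thesis by (rule finite_surj[rotated]) simp
qed

lemma subgrp_multiples:
  assumes "torsion_elem x"
  shows "subgrp (multiples x)"
  unfolding subgrp_def
proof (intro conjI ballI)
  obtain N :: nat where N: "N > 0" "(\<Sum>i<N. x) = 0"
    using assms unfolding torsion_elem_def by blast
  show "0 \<in> multiples x" by (rule zero_in_multiples)
  show "a + b \<in> multiples x" if "a \<in> multiples x" "b \<in> multiples x" for a b
    using that unfolding multiples_def by (auto simp flip: sum_const_lessThan_add)
  show "- a \<in> multiples x" if "a \<in> multiples x" for a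
  proof -
    obtain m :: nat where m: "a = (\<Sum>i<m. x)" using \<open>a \<in> multiples x\<close> unfolding multiples_def by blast
    have "m + (N - 1) * m = N * m" using N(1) by (cases N) simp_all
    then have "a + (\<Sum>i<(N - 1) * m. x) = 0"
      unfolding m sum_const_lessThan_add[symmetric] by (simp add: sum_const_lessThan_mult N(2))
    then have "- a = (\<Sum>i<(N - 1) * m. x)" by (rule minus_unique)
    then show ?thesis unfolding multiples_def by (rule range_eqI)
  qed
qed

definition lifts_finite_subgrps :: "('a::ab_group_add \<Rightarrow> 'b::ab_group_add) \<Rightarrow> bool" where
  "lifts_finite_subgrps \<pi> \<longleftrightarrow>
     (\<forall>F'. finite F' \<and> subgrp F' \<longrightarrow> (\<exists>F. finite F \<and> subgrp F \<and> F' \<subseteq> \<pi> ` F))"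

lemma lifts_finite_subgrps_bij:
  assumes "grp_hom \<pi>" "bij \<pi>"
  shows "lifts_finite_subgrps \<pi>"
  unfolding lifts_finite_subgrps_def
proof (intro allI impI)
  fix F' :: "'b set" assume "finite F' \<and> subgrp F'"
  with assms have "finite (\<pi> -` F') \<and> subgrp (\<pi> -` F') \<and> F' \<subseteq> \<pi> ` (\<pi> -` F')"
    by (simp add: subgrp_vimage finite_vimageI bij_is_inj bij_is_surj surj_image_vimage_eq)
  then show "\<exists>F. finite F \<and> subgrp F \<and> F' \<subseteq> \<pi> ` F" by blast
qed

lemma lifts_finite_subgrps_torsion:
  fixes \<pi> :: "'a::ab_group_add \<Rightarrow> 'b::ab_group_add"
  assumes "\<forall>x::'a. torsion_elem x" "surj \<pi>"
  shows "lifts_finite_subgrps \<pi>"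
  unfolding lifts_finite_subgrps_def
proof (intro allI impI)
  fix F' :: "'b set" assume F': "finite F' \<and> subgrp F'"
  define F where "F = subgrp_sum (\<lambda>y. multiples (inv \<pi> y)) F'"
  have "finite F"
    unfolding F_def using F' assms(1) by (simp add: finite_subgrp_sum finite_multiples)
  moreover have "subgrp F"
    unfolding F_def using assms(1) by (simp add: subgrp_subgrp_sum subgrp_multiples)
  moreover have "F' \<subseteq> \<pi> ` F"
  proof
    fix y assume "y \<in> F'"
    have "inv \<pi> y \<in> F"
      unfolding F_def using F' \<open>y \<in> F'\<close>
      by (intro mem_subgrp_sum[where j = y]) (simp_all add: zero_in_multiples self_in_multiples)
    then show "y \<in> \<pi> ` F"
      using surj_f_inv_f[OF assms(2)] by (metis image_eqI)
  qed
  ultimately show "\<exists>F. finite F \<and> subgrp F \<and> F' \<subseteq> \<pi> ` F" by blast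
qed

lemma finite_subgrp_cover_image:
  fixes \<pi> :: "'a::ab_group_add \<Rightarrow> 'b::ab_group_add"
    and f :: "'i \<Rightarrow> 'a \<Rightarrow> 'a" and g :: "'i \<Rightarrow> 'b \<Rightarrow> 'b" and K :: "nat \<Rightarrow> 'i set"
  assumes "grp_hom \<pi>" "lifts_finite_subgrps \<pi>" "\<And>k x. \<pi> (f k x) = g k (\<pi> x)"
    and cover: "\<forall>F. finite F \<and> subgrp F \<longrightarrow> (\<exists>n. F \<subseteq> subgrp_sum (\<lambda>k. f k ` S) (K n))"
  shows "\<forall>F'. finite F' \<and> subgrp F' \<longrightarrow> (\<exists>n. F' \<subseteq> subgrp_sum (\<lambda>k. g k ` \<pi> ` S) (K n))"
proof (intro allI impI)
  fix F' :: "'b set" assume "finite F' \<and> subgrp F'"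
  then obtain F where F: "finite F" "subgrp F" "F' \<subseteq> \<pi> ` F"
    using assms(2) unfolding lifts_finite_subgrps_def by blast
  then obtain n where "F \<subseteq> subgrp_sum (\<lambda>k. f k ` S) (K n)" using cover by blast
  moreover have "\<pi> ` subgrp_sum (\<lambda>k. f k ` S) (K n) \<subseteq> subgrp_sum (\<lambda>k. g k ` \<pi> ` S) (K n)"
    using assms(3) by (intro image_subgrp_sum_subset[OF assms(1)]) auto
  ultimately show "\<exists>n. F' \<subseteq> subgrp_sum (\<lambda>k. g k ` \<pi> ` S) (K n)"
    using F(3) by blast
qed

lemma funpow_semiconj:
  assumes "\<pi> \<circ> f = g \<circ> \<pi>"
  shows "\<pi> ((f ^^ k) x) = (g ^^ k) (\<pi> x)"
  using assms by (induction k arbitrary: x) (simp_all add: fun_eq_iff)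

lemma inv_semiconj:
  assumes "bij f" "bij g" "\<pi> \<circ> f = g \<circ> \<pi>"
  shows "\<pi> \<circ> inv f = inv g \<circ> \<pi>"
proof -
  have "inv g \<circ> \<pi> = inv g \<circ> \<pi> \<circ> (f \<circ> inv f)"
    by (simp add: surj_f_inv_f[OF bij_is_surj[OF assms(1)]] comp_def)
  also have "\<dots> = inv g \<circ> g \<circ> \<pi> \<circ> inv f" by (metis assms(3) comp_assoc)
  also have "\<dots> = \<pi> \<circ> inv f" using assms(2) by (simp add: bij_is_inj)
  finally show ?thesis ..
qed

lemma zpow_semiconj:
  assumes "bij f" "bij g" "\<pi> \<circ> f = g \<circ> \<pi>"
  shows "\<pi> (zpow f k x) = zpow g k (\<pi> x)"
  using funpow_semiconj[OF assms(3)] funpow_semiconj[OF inv_semiconj[OF assms]]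
  unfolding zpow_def by simp

lemma pos_expansive_factor:
  assumes "grp_hom \<pi>" "lifts_finite_subgrps \<pi>" "\<pi> \<circ> \<phi> = \<psi> \<circ> \<pi>" "pos_expansive \<phi>"
  shows "pos_expansive \<psi>"
proof -
  obtain S where "finite S" "subgrp S"
    "\<forall>F. finite F \<and> subgrp F \<longrightarrow> (\<exists>n. F \<subseteq> subgrp_sum (\<lambda>k. (\<phi> ^^ k) ` S) {0..n})"
    using assms(4) unfolding pos_expansive_def by blast
  with assms(1-3) show ?thesis
    unfolding pos_expansive_def
    by (intro exI[of _ "\<pi> ` S"] conjI finite_imageI subgrp_image
        finite_subgrp_cover_image[where f = "\<lambda>k. \<phi> ^^ k"] funpow_semiconj)
qed

lemma expansive_factor:
  assumes "grp_hom \<pi>" "lifts_finite_subgrps \<pi>" "\<pi> \<circ> \<phi> = \<psi> \<circ> \<pi>" "bij \<phi>" "bij \<psi>"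
    and "expansive \<phi>"
  shows "expansive \<psi>"
proof -
  obtain S where "finite S" "subgrp S"
    "\<forall>F. finite F \<and> subgrp F \<longrightarrow> (\<exists>n. F \<subseteq> subgrp_sum (\<lambda>k. zpow \<phi> k ` S) {- int n..int n})"
    using assms(6) unfolding expansive_def by blast
  with assms(1-5) show ?thesis
    unfolding expansive_def
    by (intro exI[of _ "\<pi> ` S"] conjI finite_imageI subgrp_image
        finite_subgrp_cover_image[where f = "zpow \<phi>"] zpow_semiconj)
qed

lemma conjugate_sym:
  assumes "conjugate \<phi> \<psi>"
  shows "conjugate \<psi> \<phi>"
proof -
  obtain \<pi> where \<pi>: "grp_hom \<pi>" "bij \<pi>" "\<pi> \<circ> \<phi> = \<psi> \<circ> \<pi>"
    using assms unfolding conjugate_def by blast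
  interpret additive \<pi> using \<pi>(1) by (simp add: grp_hom_iff_additive)
  have "grp_hom (inv \<pi>)"
    unfolding grp_hom_def using \<pi>(2) by (metis add bij_inv_eq_iff)
  moreover have "inv \<pi> \<circ> \<psi> = \<phi> \<circ> inv \<pi>"
  proof
    fix y
    have "\<psi> y = \<pi> (\<phi> (inv \<pi> y))" using \<pi> by (metis bij_inv_eq_iff comp_apply)
    then show "(inv \<pi> \<circ> \<psi>) y = (\<phi> \<circ> inv \<pi>) y" using \<pi>(2) by (simp add: bij_is_inj)
  qed
  ultimately show ?thesis
    unfolding conjugate_def using bij_imp_bij_inv[OF \<pi>(2)] by blast
qed

lemma pos_expansive_conjugate_iff:
  assumes "conjugate \<phi> \<psi>"
  shows "pos_expansive \<phi> \<longleftrightarrow> pos_expansive \<psi>"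
  using assms conjugate_sym[OF assms] lifts_finite_subgrps_bij pos_expansive_factor
  unfolding conjugate_def by metis

lemma expansive_conjugate_iff:
  assumes "conjugate \<phi> \<psi>" "bij \<phi>" "bij \<psi>"
  shows "expansive \<phi> \<longleftrightarrow> expansive \<psi>"
  using assms conjugate_sym[OF assms(1)] lifts_finite_subgrps_bij expansive_factor
  unfolding conjugate_def by metis

theorem proposition2p5:
  fixes \<phi> :: "'a::ab_group_add \<Rightarrow> 'a" and \<psi> :: "'b::ab_group_add \<Rightarrow> 'b"
  assumes "endomorphism \<phi>" and "endomorphism \<psi>" and "is_factor \<phi> \<psi>"
  shows "((\<forall>x::'a. torsion_elem x) \<and> pos_expansive \<phi> \<longrightarrow> pos_expansive \<psi>)
       \<and> ((\<forall>x::'a. torsion_elem x) \<and> automorphism \<phi> \<and> automorphism \<psi> \<and> expansive \<phi>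
            \<longrightarrow> expansive \<psi>)
       \<and> (conjugate \<phi> \<psi> \<longrightarrow>
            (pos_expansive \<phi> \<longleftrightarrow> pos_expansive \<psi>)
            \<and> (automorphism \<phi> \<and> automorphism \<psi> \<longrightarrow> (expansive \<phi> \<longleftrightarrow> expansive \<psi>)))"
proof -
  obtain \<pi> where \<pi>: "grp_hom \<pi>" "surj \<pi>" "\<pi> \<circ> \<phi> = \<psi> \<circ> \<pi>"
    using assms(3) unfolding is_factor_def by blast
  have lifts: "lifts_finite_subgrps \<pi>" if "\<forall>x::'a. torsion_elem x"
    using lifts_finite_subgrps_torsion[OF that \<pi>(2)] .
  have "(\<forall>x::'a. torsion_elem x) \<and> pos_expansive \<phi> \<longrightarrow> pos_expansive \<psi>"
    using pos_expansive_factor[OF \<pi>(1) lifts \<pi>(3)] by blast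
  moreover have "(\<forall>x::'a. torsion_elem x) \<and> automorphism \<phi> \<and> automorphism \<psi> \<and> expansive \<phi>
      \<longrightarrow> expansive \<psi>"
    using expansive_factor[OF \<pi>(1) lifts \<pi>(3)] unfolding automorphism_def by blast
  ultimately show ?thesis
    using pos_expansive_conjugate_iff expansive_conjugate_iff unfolding automorphism_def by blast
qed

end
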